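(* Assume $(a,b,c)\neq(0,0,0)$. (i) If $\sigma<\mu<a_1$, then $|e_{2\sigma}|<|e_{2\mu}|$. (ii) If $\sigma,\mu>0$, $\sigma,\mu\notin\{a_1,a_2,a_3\}$, $(\mu/\sigma)^2>a_3/a_1$ and $H(e_{2\sigma})=H(e_{2\mu})$, then $|e_{2\sigma}|>|e_{2\mu}|$. (iii) If $0<\sigma<a_1<a_3<\mu$ and $H(e_{2\sigma})=H(e_{2\mu})$, then $|e_{2\sigma}|>|e_{2\mu}|$.
   Context: Fix constants $0<a_1<a_2<a_3$ and $a,b,c\in\mathbb R$. For $\lambda\in\mathbb R\setminus\{a_1,a_2,a_3\}$ let $$e_{2\lambda}=\Big(\frac{a}{\lambda-a_1},\frac{b}{\lambda-a_2},\frac{c}{\lambda-a_3}\Big).$$ Let $$H(\mathbf x)=\tfrac12(a_1(x^1)^2+a_2(x^2)^2+a_3(x^3)^2)+ax^1+bx^2+cx^3,$$ and let $|\cdot|$ be the Euclidean norm on $\mathbb R^3$. *)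

theory Defs
  imports "HOL-Analysis.Analysis"
begin

definition e2 :: "real \<Rightarrow> real \<Rightarrow> real \<Rightarrow> real \<Rightarrow> real \<Rightarrow> real \<Rightarrow> real \<Rightarrow> real ^ 3" where
  "e2 a1 a2 a3 a b c l = vector [a / (l - a1), b / (l - a2), c / (l - a3)]"

definition H :: "real \<Rightarrow> real \<Rightarrow> real \<Rightarrow> real \<Rightarrow> real \<Rightarrow> real \<Rightarrow> real ^ 3 \<Rightarrow> real" where
  "H a1 a2 a3 a b c x =
     (a1 * (x $ 1)^2 + a2 * (x $ 2)^2 + a3 * (x $ 3)^2) / 2 + a * (x $ 1) + b * (x $ 2) + c * (x $ 3)"

end

theory Submission
  imports Defs
begin

text \<open>Each coordinate of \<open>x = e\<^sub>2\<^sub>\<lambda>\<close> solves \<open>a\<^sub>i x\<^sub>i + k\<^sub>i = \<lambda> x\<^sub>i\<close> with \<open>k = (a, b, c)\<close>, i.e. \<open>\<nabla>H(x) = \<lambda> x\<close>.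
  Since \<open>H\<close> is quadratic, \<open>2 (H x - H y) = \<langle>\<nabla>H x + \<nabla>H y, x - y\<rangle>\<close>, so for \<open>x = e\<^sub>2\<^sub>\<sigma>\<close>,
  \<open>y = e\<^sub>2\<^sub>\<mu>\<close> the condition \<open>H x = H y\<close> reads \<open>\<sigma>|x|\<^sup>2 + (\<mu> - \<sigma>)\<langle>x,y\<rangle> = \<mu>|y|\<^sup>2\<close>.
  For \<open>0 < \<sigma> < \<mu>\<close> and \<open>x \<noteq> y\<close>, the strict inequality \<open>2\<langle>x,y\<rangle> < |x|\<^sup>2 + |y|\<^sup>2\<close> then
  forces \<open>|y| < |x|\<close>; parts (ii) and (iii) are instances of this.
  Part (i) holds coordinatewise: \<open>|k/(\<lambda> - a\<^sub>i)|\<close> increases on \<open>\<lambda> < a\<^sub>i\<close>.\<close>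

lemma norm_less_if_inner_balanced:
  fixes x y :: "'a::real_inner"
  assumes "0 < s" "s < m" "x \<noteq> y"
    and "s * (norm x)\<^sup>2 + (m - s) * inner x y = m * (norm y)\<^sup>2"
  shows "norm y < norm x"
proof -
  have "0 < (norm (x - y))\<^sup>2" using assms(3) by simp
  then have "2 * inner x y < (norm x)\<^sup>2 + (norm y)\<^sup>2"
    by (simp add: power2_norm_eq_inner inner_diff_left inner_diff_right inner_commute)
  then have "(m - s) * (2 * inner x y) < (m - s) * ((norm x)\<^sup>2 + (norm y)\<^sup>2)"
    using assms(2) by simp
  then have "(m + s) * (norm y)\<^sup>2 < (m + s) * (norm x)\<^sup>2"
    using assms(4) by (simp add: algebra_simps)
  then have "(norm y)\<^sup>2 < (norm x)\<^sup>2"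
    using assms(1,2) by (simp add: mult_less_cancel_left)
  then show ?thesis by (simp add: power_less_imp_less_base)
qed

lemma quadratic_diff_at_shifted_roots:
  fixes p k s m x y :: real
  assumes "(s - p) * x = k" "(m - p) * y = k"
  shows "2 * ((p * x\<^sup>2 / 2 + k * x) - (p * y\<^sup>2 / 2 + k * y)) = (s * x + m * y) * (x - y)"
  using assms by (auto simp: algebra_simps power2_eq_square)

lemma e2_component_eq:
  fixes l :: real
  assumes "l \<notin> {a1, a2, a3}"
  shows "(l - a1) * e2 a1 a2 a3 a b c l $ 1 = a"
    and "(l - a2) * e2 a1 a2 a3 a b c l $ 2 = b"
    and "(l - a3) * e2 a1 a2 a3 a b c l $ 3 = c"
  using assms by (simp_all add: e2_def)

lemma norm_e2_squared:
  "(norm (e2 a1 a2 a3 a b c l))\<^sup>2 = (a / (l - a1))\<^sup>2 + (b / (l - a2))\<^sup>2 + (c / (l - a3))\<^sup>2"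
  by (simp add: e2_def norm_vec_def L2_set_def sum_3)

lemma H_e2_diff:
  fixes a1 a2 a3 a b c s m :: real
  assumes "s \<notin> {a1, a2, a3}" "m \<notin> {a1, a2, a3}"
  defines "x \<equiv> e2 a1 a2 a3 a b c s" and "y \<equiv> e2 a1 a2 a3 a b c m"
  shows "2 * (H a1 a2 a3 a b c x - H a1 a2 a3 a b c y) = inner (s *\<^sub>R x + m *\<^sub>R y) (x - y)"
proof -
  have "2 * (H a1 a2 a3 a b c x - H a1 a2 a3 a b c y) =
      2 * ((a1 * (x$1)\<^sup>2 / 2 + a * x$1) - (a1 * (y$1)\<^sup>2 / 2 + a * y$1))
    + 2 * ((a2 * (x$2)\<^sup>2 / 2 + b * x$2) - (a2 * (y$2)\<^sup>2 / 2 + b * y$2))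
    + 2 * ((a3 * (x$3)\<^sup>2 / 2 + c * x$3) - (a3 * (y$3)\<^sup>2 / 2 + c * y$3))"
    by (simp add: H_def field_simps)
  also have "\<dots> = (s * x$1 + m * y$1) * (x$1 - y$1) + (s * x$2 + m * y$2) * (x$2 - y$2)
      + (s * x$3 + m * y$3) * (x$3 - y$3)"
    unfolding x_def y_def
    by (subst (1 2 3) quadratic_diff_at_shifted_roots)
      (rule refl e2_component_eq[OF assms(1)] e2_component_eq[OF assms(2)])+
  also have "\<dots> = inner (s *\<^sub>R x + m *\<^sub>R y) (x - y)"
    by (simp add: inner_vec_def sum_3)
  finally show ?thesis .
qed

lemma inj_on_e2:
  assumes "(a, b, c) \<noteq> (0, 0, 0)"
  shows "inj_on (e2 a1 a2 a3 a b c) (- {a1, a2, a3})"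
proof (rule inj_onI, rule ccontr)
  fix s m assume "s \<in> - {a1, a2, a3}" "m \<in> - {a1, a2, a3}" "s \<noteq> m"
    and eq: "e2 a1 a2 a3 a b c s = e2 a1 a2 a3 a b c m"
  then have s: "s \<notin> {a1, a2, a3}" and m: "m \<notin> {a1, a2, a3}" by auto
  have zero: "k = 0" if "(s - p) * z = k" "(m - p) * z = k" for k p z
  proof -
    from that have "(s - m) * z = 0" by (simp add: algebra_simps)
    with \<open>s \<noteq> m\<close> have "z = 0" by simp
    with that show ?thesis by simp
  qed
  note hs = e2_component_eq[OF s, where a = a and b = b and c = c, unfolded eq]
  note hm = e2_component_eq[OF m, where a = a and b = b and c = c]
  have "a = 0" "b = 0" "c = 0"
    using zero[OF hs(1) hm(1)] zero[OF hs(2) hm(2)] zero[OF hs(3) hm(3)] by auto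
  with assms show False by simp
qed

lemma norm_e2_less_if_H_eq:
  assumes "(a, b, c) \<noteq> (0, 0, 0)" "0 < s" "s < m"
    and "s \<notin> {a1, a2, a3}" "m \<notin> {a1, a2, a3}"
    and "H a1 a2 a3 a b c (e2 a1 a2 a3 a b c s) = H a1 a2 a3 a b c (e2 a1 a2 a3 a b c m)"
  shows "norm (e2 a1 a2 a3 a b c m) < norm (e2 a1 a2 a3 a b c s)"
proof (rule norm_less_if_inner_balanced[OF assms(2,3)])
  show "e2 a1 a2 a3 a b c s \<noteq> e2 a1 a2 a3 a b c m"
    using inj_on_e2[OF assms(1)] assms(3-5) by (auto dest: inj_onD)
  have "inner (s *\<^sub>R e2 a1 a2 a3 a b c s + m *\<^sub>R e2 a1 a2 a3 a b c m)
      (e2 a1 a2 a3 a b c s - e2 a1 a2 a3 a b c m) = 0"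
    using H_e2_diff[OF assms(4,5), of a b c] assms(6) by simp
  then show "s * (norm (e2 a1 a2 a3 a b c s))\<^sup>2 + (m - s) * inner (e2 a1 a2 a3 a b c s) (e2 a1 a2 a3 a b c m)
      = m * (norm (e2 a1 a2 a3 a b c m))\<^sup>2"
    by (simp add: power2_norm_eq_inner inner_commute algebra_simps)
qed

lemma power2_div_pole_mono:
  fixes k p s m :: real
  assumes "s < m" "m < p"
  shows "(k / (s - p))\<^sup>2 \<le> (k / (m - p))\<^sup>2"
    and "k \<noteq> 0 \<Longrightarrow> (k / (s - p))\<^sup>2 < (k / (m - p))\<^sup>2"
proof -
  have abs_eq: "\<bar>k / (s - p)\<bar> = \<bar>k\<bar> / (p - s)" "\<bar>k / (m - p)\<bar> = \<bar>k\<bar> / (p - m)"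
    using assms by (simp_all add: abs_div)
  have "\<bar>k\<bar> / (p - s) \<le> \<bar>k\<bar> / (p - m)"
    using assms by (intro divide_left_mono) auto
  then show "(k / (s - p))\<^sup>2 \<le> (k / (m - p))\<^sup>2"
    using abs_eq by (metis abs_le_square_iff)
  assume "k \<noteq> 0"
  then have "\<bar>k\<bar> / (p - s) < \<bar>k\<bar> / (p - m)"
    using assms by (intro divide_strict_left_mono) auto
  then show "(k / (s - p))\<^sup>2 < (k / (m - p))\<^sup>2"
    using abs_eq by (metis abs_le_square_iff not_le)
qed

lemma norm_e2_strict_mono_below_poles:
  assumes "(a, b, c) \<noteq> (0, 0, 0)" "s < m" "m < a1" "a1 < a2" "a2 < a3"
  shows "norm (e2 a1 a2 a3 a b c s) < norm (e2 a1 a2 a3 a b c m)"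
proof -
  note A = power2_div_pole_mono[OF assms(2,3), of a]
  note B = power2_div_pole_mono[OF assms(2), of a2 b]
  note C = power2_div_pole_mono[OF assms(2), of a3 c]
  have "m < a2" "m < a3" using assms by auto
  moreover have "a \<noteq> 0 \<or> b \<noteq> 0 \<or> c \<noteq> 0" using assms(1) by auto
  ultimately have "(norm (e2 a1 a2 a3 a b c s))\<^sup>2 < (norm (e2 a1 a2 a3 a b c m))\<^sup>2"
    unfolding norm_e2_squared using A B C by (elim disjE) (simp_all, linarith?)
  then show ?thesis by (simp add: power_less_imp_less_base)
qed

theorem lemma6p1:
  fixes a1 a2 a3 a b c :: real
  assumes "0 < a1" and "a1 < a2" and "a2 < a3"
    and "(a, b, c) \<noteq> (0, 0, 0)"
  shows "(\<forall>\<sigma> \<mu>. \<sigma> < \<mu> \<and> \<mu> < a1 \<longrightarrow>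
            norm (e2 a1 a2 a3 a b c \<sigma>) < norm (e2 a1 a2 a3 a b c \<mu>))
       \<and> (\<forall>\<sigma> \<mu>. 0 < \<sigma> \<and> 0 < \<mu> \<and> \<sigma> \<notin> {a1, a2, a3} \<and> \<mu> \<notin> {a1, a2, a3}
            \<and> (\<mu> / \<sigma>)^2 > a3 / a1
            \<and> H a1 a2 a3 a b c (e2 a1 a2 a3 a b c \<sigma>) = H a1 a2 a3 a b c (e2 a1 a2 a3 a b c \<mu>)
            \<longrightarrow> norm (e2 a1 a2 a3 a b c \<sigma>) > norm (e2 a1 a2 a3 a b c \<mu>))
       \<and> (\<forall>\<sigma> \<mu>. 0 < \<sigma> \<and> \<sigma> < a1 \<and> a3 < \<mu>
            \<and> H a1 a2 a3 a b c (e2 a1 a2 a3 a b c \<sigma>) = H a1 a2 a3 a b c (e2 a1 a2 a3 a b c \<mu>)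
            \<longrightarrow> norm (e2 a1 a2 a3 a b c \<sigma>) > norm (e2 a1 a2 a3 a b c \<mu>))"
proof (intro conjI allI impI; elim conjE)
  fix s m assume "s < m" "m < a1"
  then show "norm (e2 a1 a2 a3 a b c s) < norm (e2 a1 a2 a3 a b c m)"
    using norm_e2_strict_mono_below_poles[OF assms(4) _ _ assms(2,3)] by blast
next
  fix s m assume s: "0 < s" "s \<notin> {a1, a2, a3}" and m: "0 < m" "m \<notin> {a1, a2, a3}"
    and ratio: "(m / s)\<^sup>2 > a3 / a1"
    and H_eq: "H a1 a2 a3 a b c (e2 a1 a2 a3 a b c s) = H a1 a2 a3 a b c (e2 a1 a2 a3 a b c m)"
  have "1 < a3 / a1" using assms(1-3) by simp
  then have "1 < (m / s)\<^sup>2" using ratio by linarith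
  then have "1 < m / s" using power_less_imp_less_base[of 1 2 "m / s"] s m by simp
  then have "s < m" using s by (simp add: less_divide_eq)
  then show "norm (e2 a1 a2 a3 a b c s) > norm (e2 a1 a2 a3 a b c m)"
    using norm_e2_less_if_H_eq[OF assms(4) s(1) _ s(2) m(2) H_eq] by blast
next
  fix s m assume "0 < s" "s < a1" "a3 < m"
    and H_eq: "H a1 a2 a3 a b c (e2 a1 a2 a3 a b c s) = H a1 a2 a3 a b c (e2 a1 a2 a3 a b c m)"
  then have "s < m" "s \<notin> {a1, a2, a3}" "m \<notin> {a1, a2, a3}" using assms(1-3) by auto
  then show "norm (e2 a1 a2 a3 a b c s) > norm (e2 a1 a2 a3 a b c m)"
    using norm_e2_less_if_H_eq[OF assms(4) \<open>0 < s\<close> _ _ _ H_eq] by blast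
qed

end
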